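(* Let $0<a_1\le a_2$ and $0<c_1\le c_2$ satisfy $a_1\le c_1$ and $a_1+a_2\le c_1+c_2$. Then there exists a random variable $X$ with values in $[0,1]$ such that $$\mathbb{E}[X^s]=\frac{\Gamma(a_1+s)\Gamma(a_2+s)\Gamma(c_1)\Gamma(c_2)}{\Gamma(a_1)\Gamma(a_2)\Gamma(c_1+s)\Gamma(c_2+s)}\qquad\text{for all } s>-a_1,$$ and $\log X$ is infinitely divisible. If moreover $a_1+a_2=c_1+c_2$, then $\mathbb{P}[X=1]=\frac{\Gamma(c_1)\Gamma(c_2)}{\Gamma(a_1)\Gamma(a_2)}$. *)

theory Defs
  imports "HOL-Probability.Probability" "HOL-Probability.Convolution"
begin

fun conv_pow :: "real measure \<Rightarrow> nat \<Rightarrow> real measure" where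
  "conv_pow N 0 = return borel 0"
| "conv_pow N (Suc n) = convolution N (conv_pow N n)"

definition infinitely_divisible :: "real measure \<Rightarrow> bool" where
  "infinitely_divisible \<mu> \<longleftrightarrow>
     (\<forall>n::nat. n \<ge> 1 \<longrightarrow>
        (\<exists>\<nu>. prob_space \<nu> \<and> sets \<nu> = sets borel \<and> \<mu> = conv_pow \<nu> n))"

end

(* Put Y = -ln X. The claimed moments say that the Laplace transform of Y is the gamma ratio
   R(s). Writing R as a product over k of rational factors (Gauss' formula for Gamma) and each
   logarithm ln((u + k) / (u + k + s)) as a Frullani integral turns ln R into the Levy-Khintchine
   form ln R(s) = \<integral> (e^(-st) - 1) nu(t) dt on (0, \<infinity>), with
   nu(t) = (e^(-a1 t) + e^(-a2 t) - e^(-c1 t) - e^(-c2 t)) / (t (1 - e^(-t))).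
   The hypotheses give nu(t) \<ge> d e^(-r t) / t with d = c1 + c2 - a1 - a2 and r = c1 + c2 - a1,
   which is the Levy density of the Gamma(d, r) law, and the remainder is integrable. So Y is
   a Gamma(d, r) variable plus an independent compound Poisson sum of positive jumps, a law
   that is infinitely divisible by construction. If d = 0 the gamma part vanishes and
   P(X = 1) = lim E[X^n] = lim R(n), which Gauss' formula evaluates. *)

theory Submission
  imports Defs
begin

section \<open>Convolution powers\<close>

lemma convolution_return_0:
  fixes N :: "real measure"
  assumes "finite_measure N" "sets N = sets borel"
  shows "(N \<star> return borel 0) = N"
proof (rule measure_eqI)
  fix A assume "A \<in> sets (N \<star> return borel 0)"
  then have "A \<in> sets borel" by simp
  with assms have "emeasure (N \<star> return borel 0) A = \<integral>\<^sup>+x. indicator A x \<partial>N"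
    using prob_space_return[of 0 borel, THEN prob_space.finite_measure]
    by (subst convolution_emeasure') (auto simp: nn_integral_return)
  with assms \<open>A \<in> sets borel\<close> show "emeasure (N \<star> return borel 0) A = emeasure N A" by simp
qed (use assms in simp)

lemma return_0_convolution:
  fixes N :: "real measure"
  assumes "finite_measure N" "sets N = sets borel"
  shows "(return borel 0 \<star> N) = N"
proof -
  have "(return borel 0 \<star> N) = (N \<star> return borel 0)"
    using assms prob_space_return[of 0 borel, THEN prob_space.finite_measure]
    by (intro convolution_commutative) auto
  with assms show ?thesis by (simp add: convolution_return_0)
qed

lemma distr_uminus_convolution:
  fixes N M :: "real measure"
  assumes "finite_measure N" "finite_measure M"
    and [measurable_cong]: "sets N = sets borel" "sets M = sets borel"
  shows "distr (N \<star> M) borel uminus = (distr N borel uminus \<star> distr M borel uminus)"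
proof -
  interpret M: finite_measure M by fact
  have "sigma_finite_measure (distr M borel uminus)"
    by (intro finite_measure.sigma_finite_measure M.finite_measure_distr) simp
  then have "distr N borel uminus \<Otimes>\<^sub>M distr M borel uminus =
      distr (N \<Otimes>\<^sub>M M) (borel \<Otimes>\<^sub>M borel) (\<lambda>(x, y). (- x, - y))"
    by (intro pair_measure_distr) auto
  then show ?thesis
    unfolding convolution_def by (simp add: distr_distr comp_def split_beta')
qed

lemma prob_space_convolution:
  fixes N M :: "real measure"
  assumes "prob_space N" "prob_space M"
    and [measurable_cong]: "sets N = sets borel" "sets M = sets borel"
  shows "prob_space (N \<star> M)"
proof -
  interpret N: prob_space N by fact
  interpret M: prob_space M by fact
  interpret pair_prob_space N M ..
  show ?thesis unfolding convolution_def by (rule prob_space_distr) measurable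
qed

lemma convolution_swap_middle:
  fixes A B C D :: "real measure"
  assumes "finite_measure A" "finite_measure B" "finite_measure C" "finite_measure D"
    "sets A = sets borel" "sets B = sets borel" "sets C = sets borel" "sets D = sets borel"
  shows "((A \<star> B) \<star> (C \<star> D)) = ((A \<star> C) \<star> (B \<star> D))"
proof -
  have "((A \<star> B) \<star> (C \<star> D)) = (A \<star> ((B \<star> C) \<star> D))"
    using assms by (simp add: convolution_associative convolution_finite)
  also have "(B \<star> C) = (C \<star> B)"
    using assms by (intro convolution_commutative) auto
  finally show ?thesis
    using assms by (simp add: convolution_associative convolution_finite)
qed

lemma AE_convolution_nonneg:
  fixes N M :: "real measure"
  assumes "finite_measure N" "finite_measure M" "sets N = sets borel" "sets M = sets borel"
    and "AE x in N. x \<ge> 0" "AE y in M. y \<ge> 0"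
  shows "AE z in N \<star> M. z \<ge> 0"
proof -
  have neg[measurable]: "{z::real. z < 0} \<in> sets borel" by measurable
  have "emeasure (N \<star> M) {z. z < 0} = (\<integral>\<^sup>+x. \<integral>\<^sup>+y. indicator {z. z < 0} (x + y) \<partial>M \<partial>N)"
    using assms by (intro convolution_emeasure') auto
  also have "\<dots> = (\<integral>\<^sup>+x. 0 \<partial>N)"
    using assms(5,6)
    by (intro nn_integral_cong_AE) (auto elim!: AE_mp intro!: nn_integral_zero' simp: indicator_def)
  finally show ?thesis
    by (intro AE_I[where N="{z. z < 0}"]) auto
qed

lemma nn_integral_convolution_multiplicative:
  fixes N M :: "real measure" and f :: "real \<Rightarrow> ennreal"
  assumes "finite_measure N" "finite_measure M"
    and [measurable_cong]: "sets N = sets borel" "sets M = sets borel"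
    and [measurable]: "f \<in> borel_measurable borel" and f_add: "\<And>x y. f (x + y) = f x * f y"
  shows "(\<integral>\<^sup>+z. f z \<partial>(N \<star> M)) = (\<integral>\<^sup>+x. f x \<partial>N) * (\<integral>\<^sup>+y. f y \<partial>M)"
proof -
  have "(\<integral>\<^sup>+z. f z \<partial>(N \<star> M)) = (\<integral>\<^sup>+x. \<integral>\<^sup>+y. f x * f y \<partial>M \<partial>N)"
    using assms by (simp add: nn_integral_convolution f_add)
  also have "\<dots> = (\<integral>\<^sup>+x. f x * (\<integral>\<^sup>+y. f y \<partial>M) \<partial>N)"
    by (intro nn_integral_cong nn_integral_cmult) simp
  also have "\<dots> = (\<integral>\<^sup>+x. f x \<partial>N) * (\<integral>\<^sup>+y. f y \<partial>M)"
    by (intro nn_integral_multc) simp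
  finally show ?thesis .
qed

lemma sets_conv_pow [simp, measurable_cong]: "sets (conv_pow N n) = sets borel"
  by (cases n) auto

lemma space_conv_pow [simp]: "space (conv_pow N n) = UNIV"
  using sets_eq_imp_space_eq[OF sets_conv_pow] by simp

context
  fixes \<rho> :: "real measure"
  assumes prob_rho: "prob_space \<rho>" and sets_rho [simp, measurable_cong]: "sets \<rho> = sets borel"
begin

lemma prob_space_conv_pow: "prob_space (conv_pow \<rho> n)"
  by (induction n) (auto simp: prob_rho prob_space_convolution prob_space_return)

lemma finite_measure_conv_pow: "finite_measure (conv_pow \<rho> n)"
  using prob_space_conv_pow by (rule prob_space.finite_measure)

lemma conv_pow_add: "(conv_pow \<rho> m \<star> conv_pow \<rho> n) = conv_pow \<rho> (m + n)"
proof (induction m)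
  case 0
  then show ?case
    by (simp add: return_0_convolution finite_measure_conv_pow)
next
  case (Suc m)
  then show ?case
    by (simp add: Suc[symmetric] convolution_associative finite_measure_conv_pow
        prob_space.finite_measure[OF prob_rho])
qed

lemma distr_uminus_conv_pow:
  "distr (conv_pow \<rho> n) borel uminus = conv_pow (distr \<rho> borel uminus) n"
  by (induction n)
     (simp_all add: distr_return distr_uminus_convolution finite_measure_conv_pow
       prob_space.finite_measure[OF prob_rho])

lemma AE_conv_pow_nonneg:
  assumes "AE x in \<rho>. x \<ge> 0"
  shows "AE x in conv_pow \<rho> n. x \<ge> 0"
proof (induction n)
  case (Suc n)
  then show ?case
    unfolding conv_pow.simps
    by (intro AE_convolution_nonneg assms finite_measure_conv_pow
        prob_space.finite_measure[OF prob_rho]) auto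
qed (subst conv_pow.simps, subst AE_return, auto)

lemma nn_integral_conv_pow_multiplicative:
  fixes f :: "real \<Rightarrow> ennreal"
  assumes "f \<in> borel_measurable borel" "\<And>x y. f (x + y) = f x * f y" "f 0 = 1"
  shows "(\<integral>\<^sup>+x. f x \<partial>conv_pow \<rho> n) = (\<integral>\<^sup>+x. f x \<partial>\<rho>) ^ n"
  by (induction n) (simp_all add: assms nn_integral_return nn_integral_convolution_multiplicative
      finite_measure_conv_pow prob_space.finite_measure[OF prob_rho])

end


section \<open>Random sums and Poisson laws\<close>

lemma nn_integral_swap_measure_pmf:
  fixes Q :: "nat pmf"
  assumes "\<And>n. (\<lambda>x. F x n) \<in> borel_measurable M"
  shows "(\<integral>\<^sup>+x. \<integral>\<^sup>+n. F x n \<partial>measure_pmf Q \<partial>M) = (\<integral>\<^sup>+n. \<integral>\<^sup>+x. F x n \<partial>M \<partial>measure_pmf Q)"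
proof -
  have "(\<integral>\<^sup>+x. \<integral>\<^sup>+n. F x n \<partial>measure_pmf Q \<partial>M) = (\<integral>\<^sup>+x. (\<Sum>n. ennreal (pmf Q n) * F x n) \<partial>M)"
    by (simp add: nn_integral_measure_pmf nn_integral_count_space_nat)
  also have "\<dots> = (\<Sum>n. \<integral>\<^sup>+x. ennreal (pmf Q n) * F x n \<partial>M)"
    using assms by (intro nn_integral_suminf) simp
  also have "\<dots> = (\<Sum>n. ennreal (pmf Q n) * \<integral>\<^sup>+x. F x n \<partial>M)"
    by (intro suminf_cong nn_integral_cmult assms)
  also have "\<dots> = (\<integral>\<^sup>+n. \<integral>\<^sup>+x. F x n \<partial>M \<partial>measure_pmf Q)"
    by (simp add: nn_integral_measure_pmf nn_integral_count_space_nat)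
  finally show ?thesis .
qed

lemma measurable_nn_integral_indicator_shift:
  fixes N :: "real measure"
  assumes "finite_measure N" and [measurable_cong]: "sets N = sets borel"
    and [measurable]: "A \<in> sets borel"
  shows "(\<lambda>x. \<integral>\<^sup>+y. indicator A (x + y) \<partial>N) \<in> borel_measurable borel"
proof -
  interpret finite_measure N by fact
  show ?thesis by measurable
qed

text \<open>Unlike \<open>poisson_pmf\<close>, rate \<open>0\<close> is allowed.\<close>
definition poisson_law :: "real \<Rightarrow> nat pmf" where
  "poisson_law l = (if l > 0 then poisson_pmf l else return_pmf 0)"

lemma pmf_poisson_law: "l \<ge> 0 \<Longrightarrow> pmf (poisson_law l) k = l ^ k / fact k * exp (- l)"
  by (cases "l > 0") (auto simp: poisson_law_def indicator_def)

lemma poisson_law_add: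
  assumes "a \<ge> 0" "b \<ge> 0"
  shows "map_pmf (\<lambda>(m, n). m + n) (pair_pmf (poisson_law a) (poisson_law b)) = poisson_law (a + b)"
proof (rule pmf_eqI)
  fix k :: nat
  have split: "(\<lambda>(m, n). m + n) -` {k} = (\<lambda>m. (m, k - m)) ` {..k}"
    by (auto simp: image_iff)
  have "pmf (map_pmf (\<lambda>(m, n). m + n) (pair_pmf (poisson_law a) (poisson_law b))) k =
        (\<Sum>m\<le>k. pmf (poisson_law a) m * pmf (poisson_law b) (k - m))"
    unfolding pmf_map split
    by (subst measure_measure_pmf_finite) (auto simp: sum.reindex inj_on_def pmf_pair)
  also have "\<dots> = (\<Sum>m\<le>k. of_nat (k choose m) * a ^ m * b ^ (k - m)) / fact k * exp (- (a + b))"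
    unfolding sum_divide_distrib sum_distrib_right
  proof (intro sum.cong refl)
    fix m assume "m \<in> {..k}"
    then have "of_nat (k choose m) = (fact k / (fact m * fact (k - m)) :: real)"
      by (intro binomial_fact) simp
    then show "pmf (poisson_law a) m * pmf (poisson_law b) (k - m) =
        of_nat (k choose m) * a ^ m * b ^ (k - m) / fact k * exp (- (a + b))"
      using assms by (simp add: pmf_poisson_law exp_add[symmetric] field_simps)
  qed
  also have "\<dots> = pmf (poisson_law (a + b)) k"
    using assms by (simp add: pmf_poisson_law binomial_ring[of a b k] mult_ac)
  finally show "pmf (map_pmf (\<lambda>(m, n). m + n) (pair_pmf (poisson_law a) (poisson_law b))) k =
      pmf (poisson_law (a + b)) k" .
qed

text \<open>The law of \<open>X\<^sub>1 + \<dots> + X\<^sub>N\<close> for i.i.d. \<open>X\<^sub>i \<sim> \<rho>\<close> and an independent \<open>N \<sim> P\<close>.\<close>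
definition random_sum :: "nat pmf \<Rightarrow> real measure \<Rightarrow> real measure" where
  "random_sum P \<rho> = measure_pmf P \<bind> conv_pow \<rho>"

context
  fixes \<rho> :: "real measure"
  assumes prob_rho: "prob_space \<rho>" and sets_rho [simp, measurable_cong]: "sets \<rho> = sets borel"
begin

lemma conv_pow_kernel: "conv_pow \<rho> \<in> measurable (measure_pmf P) (subprob_algebra borel)"
  using prob_space_conv_pow[OF prob_rho sets_rho]
  by (auto simp: space_subprob_algebra prob_space_imp_subprob_space)

lemma sets_random_sum [simp, measurable_cong]: "sets (random_sum P \<rho>) = sets borel"
  unfolding random_sum_def using conv_pow_kernel by (subst sets_bind) auto

lemma space_random_sum [simp]: "space (random_sum P \<rho>) = UNIV"
  using sets_eq_imp_space_eq[OF sets_random_sum] by simp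

lemma nn_integral_random_sum:
  assumes [measurable]: "f \<in> borel_measurable borel"
  shows "(\<integral>\<^sup>+x. f x \<partial>random_sum P \<rho>) = (\<integral>\<^sup>+n. \<integral>\<^sup>+x. f x \<partial>conv_pow \<rho> n \<partial>measure_pmf P)"
  unfolding random_sum_def by (rule nn_integral_bind[OF _ conv_pow_kernel]) simp

lemma emeasure_random_sum:
  assumes "A \<in> sets borel"
  shows "emeasure (random_sum P \<rho>) A = (\<integral>\<^sup>+n. emeasure (conv_pow \<rho> n) A \<partial>measure_pmf P)"
  using nn_integral_random_sum[of "indicator A" P] assms by simp

lemma prob_space_random_sum: "prob_space (random_sum P \<rho>)"
proof
  have "emeasure (conv_pow \<rho> n) UNIV = 1" for n
    using prob_space.emeasure_space_1[OF prob_space_conv_pow[OF prob_rho sets_rho]] by simp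
  then show "emeasure (random_sum P \<rho>) (space (random_sum P \<rho>)) = 1"
    by (simp add: emeasure_random_sum)
qed

lemma AE_random_sum_nonneg:
  assumes "AE x in \<rho>. x \<ge> 0"
  shows "AE x in random_sum P \<rho>. x \<ge> 0"
proof -
  have neg: "{x::real. x < 0} \<in> sets borel" by measurable
  have "emeasure (conv_pow \<rho> n) {x. x < 0} = 0" for n
    using AE_conv_pow_nonneg[OF prob_rho sets_rho assms, of n] neg
    by (subst (asm) AE_iff_measurable[where N="{x. x < 0}"]) (auto simp: not_le)
  then have "emeasure (random_sum P \<rho>) {x. x < 0} = 0"
    using neg by (simp add: emeasure_random_sum)
  then show ?thesis
    using neg by (intro AE_I[where N="{x. x < 0}"]) auto
qed

lemma random_sum_convolution:
  "(random_sum P \<rho> \<star> random_sum Q \<rho>) = random_sum (map_pmf (\<lambda>(m, n). m + n) (pair_pmf P Q)) \<rho>"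
proof (rule measure_eqI)
  fix A assume "A \<in> sets (random_sum P \<rho> \<star> random_sum Q \<rho>)"
  then have A[measurable]: "A \<in> sets borel" by simp
  have fin: "finite_measure (random_sum P \<rho>)" "finite_measure (random_sum Q \<rho>)"
    using prob_space_random_sum by (auto simp: prob_space.finite_measure)
  note fin_pow = finite_measure_conv_pow[OF prob_rho sets_rho]
  have "emeasure (random_sum P \<rho> \<star> random_sum Q \<rho>) A
      = (\<integral>\<^sup>+x. \<integral>\<^sup>+y. indicator A (x + y) \<partial>random_sum Q \<rho> \<partial>random_sum P \<rho>)"
    using fin by (simp add: convolution_emeasure')
  also have "\<dots> = (\<integral>\<^sup>+m. \<integral>\<^sup>+x. \<integral>\<^sup>+y. indicator A (x + y) \<partial>random_sum Q \<rho> \<partial>conv_pow \<rho> m \<partial>measure_pmf P)"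
    using fin by (intro nn_integral_random_sum measurable_nn_integral_indicator_shift) auto
  also have "\<dots> = (\<integral>\<^sup>+m. \<integral>\<^sup>+x. \<integral>\<^sup>+n. \<integral>\<^sup>+y. indicator A (x + y)
      \<partial>conv_pow \<rho> n \<partial>measure_pmf Q \<partial>conv_pow \<rho> m \<partial>measure_pmf P)"
    by (intro nn_integral_cong nn_integral_random_sum) simp
  also have "\<dots> = (\<integral>\<^sup>+m. \<integral>\<^sup>+n. \<integral>\<^sup>+x. \<integral>\<^sup>+y. indicator A (x + y)
      \<partial>conv_pow \<rho> n \<partial>conv_pow \<rho> m \<partial>measure_pmf Q \<partial>measure_pmf P)"
    using measurable_nn_integral_indicator_shift[OF fin_pow sets_conv_pow A]
    by (intro nn_integral_cong nn_integral_swap_measure_pmf) simp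
  also have "\<dots> = (\<integral>\<^sup>+m. \<integral>\<^sup>+n. emeasure (conv_pow \<rho> (m + n)) A \<partial>measure_pmf Q \<partial>measure_pmf P)"
    by (simp add: convolution_emeasure'[symmetric] fin_pow conv_pow_add[OF prob_rho sets_rho])
  also have "\<dots> = emeasure (random_sum (map_pmf (\<lambda>(m, n). m + n) (pair_pmf P Q)) \<rho>) A"
    by (simp add: emeasure_random_sum nn_integral_pair_pmf')
  finally show "emeasure (random_sum P \<rho> \<star> random_sum Q \<rho>) A
      = emeasure (random_sum (map_pmf (\<lambda>(m, n). m + n) (pair_pmf P Q)) \<rho>) A" .
qed simp

lemma nn_integral_random_sum_poisson:
  fixes f :: "real \<Rightarrow> real"
  assumes [measurable]: "f \<in> borel_measurable borel"
    and f_add: "\<And>x y. f (x + y) = f x * f y" and "f 0 = 1" and "\<And>x. f x \<ge> 0"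
    and L: "(\<integral>\<^sup>+x. ennreal (f x) \<partial>\<rho>) = ennreal L" "L \<ge> 0" and "l \<ge> 0"
  shows "(\<integral>\<^sup>+x. ennreal (f x) \<partial>random_sum (poisson_law l) \<rho>) = ennreal (exp (l * (L - 1)))"
proof -
  have "(\<integral>\<^sup>+x. ennreal (f x) \<partial>random_sum (poisson_law l) \<rho>) =
      (\<integral>\<^sup>+n. ennreal L ^ n \<partial>measure_pmf (poisson_law l))"
    using assms
    by (simp add: nn_integral_random_sum nn_integral_conv_pow_multiplicative[OF prob_rho sets_rho]
        ennreal_mult'')
  also have "\<dots> = (\<Sum>n. ennreal (pmf (poisson_law l) n) * ennreal L ^ n)"
    by (simp add: nn_integral_measure_pmf nn_integral_count_space_nat)
  also have "\<dots> = (\<Sum>n. ennreal (exp (- l) * ((l * L) ^ n / fact n)))"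
    using assms by (intro suminf_cong) (simp add: pmf_poisson_law ennreal_power
        ennreal_mult'[symmetric] power_mult_distrib field_simps)
  also have "\<dots> = ennreal (\<Sum>n. exp (- l) * ((l * L) ^ n / fact n))"
  proof (rule suminf_ennreal2)
    show "\<And>n. 0 \<le> exp (- l) * ((l * L) ^ n / fact n)" using assms by simp
    show "summable (\<lambda>n. exp (- l) * ((l * L) ^ n / fact n))"
      using exp_converges[of "l * L"]
      by (intro summable_mult) (simp add: sums_iff divide_inverse mult.commute)
  qed
  also have "(\<Sum>n. exp (- l) * ((l * L) ^ n / fact n)) = exp (- l) * exp (l * L)"
    using exp_converges[of "l * L"]
    by (subst suminf_mult) (auto simp: sums_iff divide_inverse mult.commute)
  also have "exp (- l) * exp (l * L) = exp (l * (L - 1))"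
    by (simp add: exp_add[symmetric] algebra_simps)
  finally show ?thesis .
qed

end


section \<open>Gamma laws\<close>

definition gamma_kernel :: "real \<Rightarrow> real \<Rightarrow> real \<Rightarrow> real" where
  "gamma_kernel a b y = indicator {0<..} y * y powr (a - 1) * exp (- b * y)"

lemma gamma_kernel_measurable [measurable]: "gamma_kernel a b \<in> borel_measurable borel"
  unfolding gamma_kernel_def by measurable

lemma nn_integral_gamma_kernel:
  assumes a: "a > 0" and b: "b > 0"
  shows "(\<integral>\<^sup>+y. ennreal (gamma_kernel a b y) \<partial>lborel) = ennreal (Gamma a / b powr a)"
proof -
  define f where "f t = ennreal (indicator {0..} t * t powr (a - 1) / exp t)" for t :: real
  have [measurable]: "f \<in> borel_measurable borel" unfolding f_def by measurable
  have "ennreal (Gamma a) = (\<integral>\<^sup>+t. f t \<partial>lborel)"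
    unfolding f_def using Gamma_conv_nn_integral_real[OF a] by simp
  also have "\<dots> = ennreal b * (\<integral>\<^sup>+y. f (b * y) \<partial>lborel)"
    using nn_integral_real_affine[of f b 0] b by simp
  also have "(\<integral>\<^sup>+y. f (b * y) \<partial>lborel) =
      (\<integral>\<^sup>+y. ennreal (b powr (a - 1)) * ennreal (gamma_kernel a b y) \<partial>lborel)"
  proof (intro nn_integral_cong)
    fix y :: real
    show "f (b * y) = ennreal (b powr (a - 1)) * ennreal (gamma_kernel a b y)"
      using b unfolding f_def gamma_kernel_def
      by (cases "y > 0"; cases "y = 0")
         (auto simp: indicator_def zero_le_mult_iff ennreal_mult'[symmetric] powr_mult exp_minus
           field_simps)
  qed
  also have "\<dots> = ennreal (b powr (a - 1)) * (\<integral>\<^sup>+y. ennreal (gamma_kernel a b y) \<partial>lborel)"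
    by (rule nn_integral_cmult) measurable
  also have "ennreal b * (ennreal (b powr (a - 1)) * x) = ennreal (b powr a) * x" for x
    using b by (simp add: ennreal_mult'[symmetric] mult.assoc[symmetric] powr_mult_base)
  finally have "ennreal (Gamma a) =
      ennreal (b powr a) * (\<integral>\<^sup>+y. ennreal (gamma_kernel a b y) \<partial>lborel)" .
  moreover have "b powr a > 0" using b by simp
  ultimately have "(\<integral>\<^sup>+y. ennreal (gamma_kernel a b y) \<partial>lborel) =
      ennreal (Gamma a) / ennreal (b powr a)"
    by (simp add: mult.commute[of "ennreal (b powr a)"] ennreal_mult_divide_eq)
  with \<open>b powr a > 0\<close> show ?thesis
    using a by (simp add: divide_ennreal)
qed

lemma nn_integral_beta_kernel:
  assumes a: "a > 0" and b: "b > 0" and x: "x > 0"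
  shows "(\<integral>\<^sup>+y. ennreal (indicator {0<..<x} y * (x - y) powr (a - 1) * y powr (b - 1)) \<partial>lborel)
       = ennreal (x powr (a + b - 1) * Beta b a)"
proof -
  define F where
    "F y = ennreal (indicator {0<..<x} y * (x - y) powr (a - 1) * y powr (b - 1))" for y
  have [measurable]: "F \<in> borel_measurable borel" unfolding F_def by measurable
  have beta: "(\<integral>\<^sup>+t. ennreal (t powr (b - 1) * (1 - t) powr (a - 1)) * indicator {0..1} t \<partial>lborel)
      = ennreal (Beta b a)"
    by (rule nn_integral_has_integral_lebesgue'[OF _ has_integral_Beta_real[OF b a]]) auto
  have "(\<integral>\<^sup>+y. F y \<partial>lborel) = ennreal x * (\<integral>\<^sup>+t. F (x * t) \<partial>lborel)"
    using nn_integral_real_affine[of F x 0] x by simp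
  also have "(\<integral>\<^sup>+t. F (x * t) \<partial>lborel) = (\<integral>\<^sup>+t. ennreal (x powr (a - 1) * x powr (b - 1)) *
      (ennreal (t powr (b - 1) * (1 - t) powr (a - 1)) * indicator {0..1} t) \<partial>lborel)"
  proof (intro nn_integral_cong)
    fix t :: real
    show "F (x * t) = ennreal (x powr (a - 1) * x powr (b - 1)) *
        (ennreal (t powr (b - 1) * (1 - t) powr (a - 1)) * indicator {0..1} t)"
    proof (cases "0 < t \<and> t < 1")
      case True
      then have "x - x * t = x * (1 - t)" by (simp add: algebra_simps)
      with True x show ?thesis unfolding F_def
        by (simp add: ennreal_mult'[symmetric] powr_mult mult_ac)
    next
      case False
      then show ?thesis unfolding F_def using x
        by (auto simp: indicator_def mult_le_0_iff zero_le_mult_iff mult_less_0_iff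
            zero_less_mult_iff)
    qed
  qed
  also have "\<dots> = ennreal (x powr (a - 1) * x powr (b - 1)) * ennreal (Beta b a)"
    by (subst nn_integral_cmult) (auto simp: beta)
  also have "ennreal x * \<dots> = ennreal (x powr (a + b - 1) * Beta b a)"
    using x a b by (simp add: ennreal_mult'[symmetric] Beta_def powr_add[symmetric]
        powr_mult_base mult.assoc[symmetric])
  finally show ?thesis unfolding F_def .
qed

definition gamma_density :: "real \<Rightarrow> real \<Rightarrow> real \<Rightarrow> real" where
  "gamma_density a r y = r powr a / Gamma a * gamma_kernel a r y"

text \<open>Shape \<open>0\<close> gives the point mass at \<open>0\<close>, so that the gamma laws of a fixed rate form a
  convolution semigroup indexed by \<open>a \<ge> 0\<close>.\<close>
definition gamma_distr :: "real \<Rightarrow> real \<Rightarrow> real measure" where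
  "gamma_distr a r =
     (if a > 0 then density lborel (\<lambda>y. ennreal (gamma_density a r y)) else return borel 0)"

lemma gamma_density_measurable [measurable]: "gamma_density a r \<in> borel_measurable borel"
  unfolding gamma_density_def by measurable

lemma sets_gamma_distr [simp, measurable_cong]: "sets (gamma_distr a r) = sets borel"
  by (simp add: gamma_distr_def)

lemma space_gamma_distr [simp]: "space (gamma_distr a r) = UNIV"
  using sets_eq_imp_space_eq[OF sets_gamma_distr] by simp

lemma nn_integral_exp_gamma_distr:
  assumes a: "a \<ge> 0" and r: "r > 0" and rs: "r + s > 0"
  shows "(\<integral>\<^sup>+y. ennreal (exp (- s * y)) \<partial>gamma_distr a r) = ennreal ((r / (r + s)) powr a)"
proof (cases "a > 0")
  case True
  have "ennreal (gamma_density a r y) * ennreal (exp (- s * y)) =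
      ennreal (r powr a / Gamma a) * ennreal (gamma_kernel a (r + s) y)" for y
    using True by (simp add: gamma_density_def gamma_kernel_def ennreal_mult'[symmetric]
        mult_exp_exp algebra_simps)
  then have "(\<integral>\<^sup>+y. ennreal (exp (- s * y)) \<partial>gamma_distr a r) =
      ennreal (r powr a / Gamma a) * ennreal (Gamma a / (r + s) powr a)"
    using True rs by (simp add: gamma_distr_def nn_integral_density nn_integral_cmult
        nn_integral_gamma_kernel)
  also have "\<dots> = ennreal ((r / (r + s)) powr a)"
    using True r rs Gamma_real_pos[OF True]
    by (simp add: ennreal_mult'[symmetric] powr_divide less_imp_neq[symmetric])
  finally show ?thesis .
qed (use a r rs in \<open>simp add: gamma_distr_def nn_integral_return\<close>)

lemma prob_space_gamma_distr:
  assumes "a \<ge> 0" "r > 0"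
  shows "prob_space (gamma_distr a r)"
proof
  have "emeasure (gamma_distr a r) UNIV = (\<integral>\<^sup>+y. ennreal (exp (- 0 * y)) \<partial>gamma_distr a r)"
    by simp
  then show "emeasure (gamma_distr a r) (space (gamma_distr a r)) = 1"
    using nn_integral_exp_gamma_distr[of a r 0] assms by simp
qed

lemma AE_gamma_distr_nonneg: "AE y in gamma_distr a r. y \<ge> 0"
proof (cases "a > 0")
  case True
  then show ?thesis
    unfolding gamma_distr_def if_P[OF True]
    by (subst AE_density)
       (auto simp: gamma_density_def gamma_kernel_def indicator_def intro!: AE_I2)
next
  case False
  then show ?thesis
    unfolding gamma_distr_def if_not_P[OF False] by (subst AE_return) auto
qed

lemma gamma_density_convolution:
  assumes a: "a > 0" and b: "b > 0"
  shows "(\<integral>\<^sup>+y. ennreal (gamma_density a r (x - y)) * ennreal (gamma_density b r y) \<partial>lborel)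
      = ennreal (gamma_density (a + b) r x)"
proof (cases "x > 0")
  case False
  then have "ennreal (gamma_density a r (x - y)) * ennreal (gamma_density b r y) = 0" for y
    by (cases "y > 0") (simp_all add: gamma_density_def gamma_kernel_def)
  then show ?thesis
    using False by (simp add: gamma_density_def gamma_kernel_def del: mult_eq_0_iff)
next
  case True
  define C where "C = r powr a / Gamma a * (r powr b / Gamma b) * exp (- r * x)"
  have C: "C \<ge> 0" using a b by (simp add: C_def)
  have "(\<integral>\<^sup>+y. ennreal (gamma_density a r (x - y)) * ennreal (gamma_density b r y) \<partial>lborel) =
      (\<integral>\<^sup>+y. ennreal C *
         ennreal (indicator {0<..<x} y * (x - y) powr (a - 1) * y powr (b - 1)) \<partial>lborel)"
    using a b unfolding gamma_density_def gamma_kernel_def C_def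
    by (intro nn_integral_cong)
       (auto simp: indicator_def ennreal_mult'[symmetric] mult_exp_exp algebra_simps)
  also have "\<dots> = ennreal C * ennreal (x powr (a + b - 1) * Beta b a)"
    by (subst nn_integral_cmult) (auto simp: nn_integral_beta_kernel a b True)
  also have "\<dots> = ennreal (C * (x powr (a + b - 1) * Beta b a))"
    using C by (simp add: ennreal_mult'[symmetric])
  also have "C * (x powr (a + b - 1) * Beta b a) = gamma_density (a + b) r x"
    using a b True Gamma_real_pos[of a] Gamma_real_pos[of b] Gamma_real_pos[of "a + b"]
    unfolding C_def gamma_density_def gamma_kernel_def Beta_def
    by (simp add: powr_add field_simps less_imp_neq[symmetric])
  finally show ?thesis .
qed

lemma gamma_distr_convolution:
  assumes a: "a \<ge> 0" and b: "b \<ge> 0" and r: "r > 0"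
  shows "(gamma_distr a r \<star> gamma_distr b r) = gamma_distr (a + b) r"
proof -
  have fin: "finite_measure (gamma_distr c r)" if "c \<ge> 0" for c
    using prob_space_gamma_distr[OF that r] by (rule prob_space.finite_measure)
  consider "a > 0" "b > 0" | "a = 0" | "b = 0" using a b by linarith
  then show ?thesis
  proof cases
    case 1
    then show ?thesis
      using fin[OF a] fin[OF b] unfolding gamma_distr_def
      by (simp add: convolution_density gamma_density_convolution)
  next
    case 2
    then show ?thesis
      using fin[OF b] by (simp add: return_0_convolution gamma_distr_def[of 0])
  next
    case 3
    then show ?thesis
      using fin[OF a] by (simp add: convolution_return_0 gamma_distr_def[of 0])
  qed
qed


section \<open>Gamma plus compound Poisson laws\<close>

definition gamma_compound_poisson :: "real \<Rightarrow> real \<Rightarrow> real \<Rightarrow> real measure \<Rightarrow> real measure" where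
  "gamma_compound_poisson d r l \<rho> = (gamma_distr d r \<star> random_sum (poisson_law l) \<rho>)"

lemma sets_gamma_compound_poisson [simp, measurable_cong]:
  "sets (gamma_compound_poisson d r l \<rho>) = sets borel"
  by (simp add: gamma_compound_poisson_def)

context
  fixes \<rho> :: "real measure" and r :: real
  assumes prob_rho: "prob_space \<rho>" and sets_rho [simp, measurable_cong]: "sets \<rho> = sets borel"
    and r_pos: "r > 0"
begin

declare sets_random_sum[OF prob_rho sets_rho, simp]

lemma prob_space_gamma_compound_poisson:
  "d \<ge> 0 \<Longrightarrow> prob_space (gamma_compound_poisson d r l \<rho>)"
  unfolding gamma_compound_poisson_def
  by (intro prob_space_convolution prob_space_gamma_distr prob_space_random_sum prob_rho r_pos)
     simp_all

lemma AE_gamma_compound_poisson_nonneg: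
  assumes "d \<ge> 0" "AE y in \<rho>. y \<ge> 0"
  shows "AE y in gamma_compound_poisson d r l \<rho>. y \<ge> 0"
  unfolding gamma_compound_poisson_def
  using assms prob_space_gamma_distr[OF _ r_pos] prob_space_random_sum[OF prob_rho sets_rho]
  by (intro AE_convolution_nonneg AE_gamma_distr_nonneg AE_random_sum_nonneg prob_rho)
     (auto simp: prob_space.finite_measure)

lemma gamma_compound_poisson_convolution:
  assumes "d \<ge> 0" "d' \<ge> 0" "l \<ge> 0" "l' \<ge> 0"
  shows "(gamma_compound_poisson d r l \<rho> \<star> gamma_compound_poisson d' r l' \<rho>) =
      gamma_compound_poisson (d + d') r (l + l') \<rho>"
proof -
  have fin: "finite_measure (gamma_distr c r)" "finite_measure (random_sum (poisson_law c) \<rho>)"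
    if "c \<ge> 0" for c
    using prob_space_gamma_distr[OF that r_pos] prob_space_random_sum[OF prob_rho sets_rho]
    by (auto simp: prob_space.finite_measure)
  have "(gamma_compound_poisson d r l \<rho> \<star> gamma_compound_poisson d' r l' \<rho>) =
      ((gamma_distr d r \<star> gamma_distr d' r) \<star>
       (random_sum (poisson_law l) \<rho> \<star> random_sum (poisson_law l') \<rho>))"
    unfolding gamma_compound_poisson_def using assms fin
    by (intro convolution_swap_middle) auto
  then show ?thesis
    using assms by (simp add: gamma_compound_poisson_def gamma_distr_convolution r_pos
        random_sum_convolution[OF prob_rho sets_rho] poisson_law_add)
qed

lemma conv_pow_gamma_compound_poisson:
  fixes d l :: real
  assumes "d \<ge> 0" "l \<ge> 0"
  shows "conv_pow (gamma_compound_poisson d r l \<rho>) (Suc n) =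
      gamma_compound_poisson (real (Suc n) * d) r (real (Suc n) * l) \<rho>"
proof (induction n)
  case 0
  then show ?case
    using assms prob_space_gamma_compound_poisson
    by (simp add: convolution_return_0 prob_space.finite_measure)
next
  case (Suc n)
  then show ?case
    using assms by (simp add: gamma_compound_poisson_convolution algebra_simps)
qed

lemma infinitely_divisible_gamma_compound_poisson:
  assumes "d \<ge> 0" "l \<ge> 0"
  shows "infinitely_divisible (distr (gamma_compound_poisson d r l \<rho>) borel uminus)"
  unfolding infinitely_divisible_def
proof (intro allI impI)
  fix n :: nat assume "n \<ge> 1"
  define \<mu> where "\<mu> = gamma_compound_poisson (d / real n) r (l / real n) \<rho>"
  have \<mu>: "prob_space \<mu>" "sets \<mu> = sets borel"
    using assms by (auto simp: \<mu>_def prob_space_gamma_compound_poisson)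
  have "gamma_compound_poisson d r l \<rho> = conv_pow \<mu> n"
    using conv_pow_gamma_compound_poisson[of "d / real n" "l / real n" "n - 1"] assms \<open>n \<ge> 1\<close>
    by (simp add: \<mu>_def)
  then have "distr (gamma_compound_poisson d r l \<rho>) borel uminus =
      conv_pow (distr \<mu> borel uminus) n"
    by (simp add: distr_uminus_conv_pow[OF \<mu>])
  moreover have "prob_space (distr \<mu> borel uminus)"
    using \<mu> by (intro prob_space.prob_space_distr) auto
  ultimately show "\<exists>\<nu>. prob_space \<nu> \<and> sets \<nu> = sets borel \<and>
      distr (gamma_compound_poisson d r l \<rho>) borel uminus = conv_pow \<nu> n"
    by auto
qed

lemma nn_integral_exp_gamma_compound_poisson:
  assumes "d \<ge> 0" "l \<ge> 0" "r + s > 0"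
    and L: "(\<integral>\<^sup>+y. ennreal (exp (- s * y)) \<partial>\<rho>) = ennreal L" "L \<ge> 0"
  shows "(\<integral>\<^sup>+y. ennreal (exp (- s * y)) \<partial>gamma_compound_poisson d r l \<rho>) =
      ennreal ((r / (r + s)) powr d * exp (l * (L - 1)))"
proof -
  have "(\<integral>\<^sup>+y. ennreal (exp (- s * y)) \<partial>gamma_compound_poisson d r l \<rho>) =
      (\<integral>\<^sup>+y. ennreal (exp (- s * y)) \<partial>gamma_distr d r) *
      (\<integral>\<^sup>+y. ennreal (exp (- s * y)) \<partial>random_sum (poisson_law l) \<rho>)"
    unfolding gamma_compound_poisson_def using assms
      prob_space_gamma_distr[OF _ r_pos] prob_space_random_sum[OF prob_rho sets_rho]
    by (intro nn_integral_convolution_multiplicative)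
       (auto simp: prob_space.finite_measure ennreal_mult[symmetric] exp_add[symmetric]
         algebra_simps)
  also have "\<dots> = ennreal ((r / (r + s)) powr d) * ennreal (exp (l * (L - 1)))"
    using assms
    by (subst nn_integral_exp_gamma_distr[OF assms(1) r_pos assms(3)])
       (simp add: nn_integral_random_sum_poisson[OF prob_rho sets_rho] distrib_left mult_exp_exp)
  finally show ?thesis by (simp add: ennreal_mult)
qed

end


section \<open>Laws on the unit interval as images under \<open>y \<mapsto> e^(-y)\<close>\<close>

lemma nn_integral_powr_distr_exp_neg:
  fixes \<mu> :: "real measure"
  assumes [measurable_cong]: "sets \<mu> = sets borel"
  shows "(\<integral>\<^sup>+x. ennreal (x powr s) \<partial>distr \<mu> borel (\<lambda>y. exp (- y))) =
      (\<integral>\<^sup>+y. ennreal (exp (- s * y)) \<partial>\<mu>)"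
  by (subst nn_integral_distr) (auto simp: powr_def)

lemma distr_ln_distr_exp_neg:
  fixes \<mu> :: "real measure"
  assumes [measurable_cong]: "sets \<mu> = sets borel"
  shows "distr (distr \<mu> borel (\<lambda>y. exp (- y))) borel ln = distr \<mu> borel uminus"
  by (subst distr_distr) (auto simp: comp_def intro!: distr_cong)

lemma measure_1_eq_lim_moments:
  fixes M :: "real measure"
  assumes "prob_space M" and [measurable_cong]: "sets M = sets borel"
    and unit: "AE x in M. 0 \<le> x \<and> x \<le> 1"
    and lim: "(\<lambda>n. \<integral>x. x powr real n \<partial>M) \<longlonglongrightarrow> c"
  shows "measure M {1} = c"
proof -
  interpret prob_space M by fact
  have "(\<lambda>n. \<integral>x. x powr real n \<partial>M) \<longlonglongrightarrow> (\<integral>x. indicator {1} x \<partial>M)"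
  proof (rule integral_dominated_convergence[where w="\<lambda>_. 1"])
    show "AE x in M. (\<lambda>n. x powr real n) \<longlonglongrightarrow> indicator {1} x"
      using unit
    proof eventually_elim
      case (elim x)
      show ?case
      proof (cases "x = 0 \<or> x = 1")
        case False
        with elim have "0 < x" "x < 1" by auto
        then show ?thesis
          using LIMSEQ_power_zero[of x] by (simp add: powr_realpow)
      qed auto
    qed
    show "\<And>n. AE x in M. norm (x powr real n) \<le> 1"
      using unit by eventually_elim (auto intro!: powr_le1)
  qed auto
  with lim show ?thesis
    using LIMSEQ_unique by fastforce
qed


section \<open>Frullani integrals\<close>

definition frullani_integrand :: "real \<Rightarrow> real \<Rightarrow> real \<Rightarrow> real" where
  "frullani_integrand u v t = (if t > 0 then (exp (- u * t) - exp (- v * t)) / t else 0)"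

lemma frullani_integrand_measurable [measurable]: "frullani_integrand u v \<in> borel_measurable borel"
  unfolding frullani_integrand_def by measurable

lemma nn_integral_exp_interval:
  assumes t: "t > 0" and uv: "u \<le> v"
  shows "(\<integral>\<^sup>+w. ennreal (exp (- w * t)) * indicator {u..v} w \<partial>lborel) =
      ennreal ((exp (- u * t) - exp (- v * t)) / t)"
proof -
  have "((\<lambda>w. exp (- w * t)) has_integral
      ((\<lambda>w. - exp (- w * t) / t) v - (\<lambda>w. - exp (- w * t) / t) u)) {u..v}"
  proof (rule fundamental_theorem_of_calculus[OF uv])
    fix w assume "w \<in> {u..v}"
    have "((\<lambda>w. - exp (- w * t) / t) has_real_derivative exp (- w * t)) (at w)"
      using t by (auto intro!: derivative_eq_intros)
    then show "((\<lambda>w. - exp (- w * t) / t) has_vector_derivative exp (- w * t)) (at w within {u..v})"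
      by (simp add: has_real_derivative_iff_has_vector_derivative has_vector_derivative_at_within)
  qed
  then have "((\<lambda>w. exp (- w * t)) has_integral ((exp (- u * t) - exp (- v * t)) / t)) {u..v}"
    by (simp add: diff_divide_distrib)
  from nn_integral_has_integral_lebesgue'[OF _ this] show ?thesis by simp
qed

lemma nn_integral_inverse_interval:
  assumes u: "u > 0" and uv: "u \<le> v"
  shows "(\<integral>\<^sup>+w. ennreal (1 / w) * indicator {u..v} w \<partial>lborel) = ennreal (ln v - ln u)"
proof -
  have "((\<lambda>w. 1 / w) has_integral (ln v - ln u)) {u..v}"
  proof (rule fundamental_theorem_of_calculus[OF uv])
    fix w assume "w \<in> {u..v}"
    then have "(ln has_real_derivative 1 / w) (at w)"
      using u by (auto intro!: derivative_eq_intros)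
    then show "(ln has_vector_derivative 1 / w) (at w within {u..v})"
      by (simp add: has_real_derivative_iff_has_vector_derivative has_vector_derivative_at_within)
  qed
  from nn_integral_has_integral_lebesgue'[OF _ this] u show ?thesis by auto
qed

text \<open>Write \<open>(e^(-ut) - e^(-vt)) / t\<close> as \<open>\<integral>\<^sub>u\<^sup>v e^(-wt) dw\<close> and integrate in \<open>t\<close> first.\<close>
lemma nn_integral_frullani_integrand:
  assumes u: "u > 0" and uv: "u \<le> v"
  shows "(\<integral>\<^sup>+t. ennreal (frullani_integrand u v t) \<partial>lborel) = ennreal (ln v - ln u)"
proof -
  have "(\<integral>\<^sup>+t. ennreal (frullani_integrand u v t) \<partial>lborel) =
      (\<integral>\<^sup>+t. \<integral>\<^sup>+w. ennreal (exp (- w * t)) * indicator {u..v} w * indicator {0<..} t \<partial>lborel \<partial>lborel)"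
    using nn_integral_exp_interval[OF _ uv]
    by (intro nn_integral_cong) (auto simp: frullani_integrand_def nn_integral_multc)
  also have "\<dots> = (\<integral>\<^sup>+w. \<integral>\<^sup>+t.
      ennreal (exp (- w * t)) * indicator {u..v} w * indicator {0<..} t \<partial>lborel \<partial>lborel)"
    by (rule lborel_pair.Fubini') measurable
  also have "\<dots> = (\<integral>\<^sup>+w. ennreal (1 / w) * indicator {u..v} w \<partial>lborel)"
  proof (intro nn_integral_cong)
    fix w :: real
    show "(\<integral>\<^sup>+t. ennreal (exp (- w * t)) * indicator {u..v} w * indicator {0<..} t \<partial>lborel) =
        ennreal (1 / w) * indicator {u..v} w"
    proof (cases "w \<in> {u..v}")
      case True
      then have "w > 0" using u by auto
      have "(\<integral>\<^sup>+t. ennreal (exp (- w * t)) * indicator {0<..} t \<partial>lborel) =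
          (\<integral>\<^sup>+t. ennreal (gamma_kernel 1 w t) \<partial>lborel)"
        by (intro nn_integral_cong) (auto simp: gamma_kernel_def indicator_def)
      with True \<open>w > 0\<close> show ?thesis by (simp add: nn_integral_gamma_kernel)
    qed simp
  qed
  also have "\<dots> = ennreal (ln v - ln u)" by (rule nn_integral_inverse_interval[OF u uv])
  finally show ?thesis .
qed

lemma frullani:
  assumes "u > 0" "v > 0"
  shows "integrable lborel (frullani_integrand u v)"
    and "(\<integral>t. frullani_integrand u v t \<partial>lborel) = ln v - ln u"
proof -
  have *: "integrable lborel (frullani_integrand u v) \<and>
      (\<integral>t. frullani_integrand u v t \<partial>lborel) = ln v - ln u" if "u > 0" "u \<le> v" for u v
  proof -
    have "0 \<le> frullani_integrand u v t" for t
      using that by (auto simp: frullani_integrand_def divide_nonneg_pos)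
    then show ?thesis
      using that nn_integral_frullani_integrand[OF that]
        nn_integral_eq_integrable[of "frullani_integrand u v" lborel "ln v - ln u"] by auto
  qed
  have "frullani_integrand u v = (\<lambda>t. - frullani_integrand v u t)"
    by (auto simp: frullani_integrand_def fun_eq_iff field_simps)
  then show "integrable lborel (frullani_integrand u v)"
    and "(\<integral>t. frullani_integrand u v t \<partial>lborel) = ln v - ln u"
    using *[of u v] *[of v u] assms by (cases "u \<le> v"; simp)+
qed


section \<open>The Levy measure of the gamma ratio\<close>

lemma Gamma_series_pos: "z > 0 \<Longrightarrow> Gamma_series z n > (0::real)"
  by (simp add: Gamma_series_def pochhammer_pos)

lemma Gamma_add_nat_eq_Gamma_series:
  fixes z :: real
  assumes z: "z > 0"
  shows "Gamma (z + real n + 1) = Gamma z * fact n * exp (z * ln (real n)) / Gamma_series z n"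
proof -
  have "z \<notin> \<int>\<^sub>\<le>\<^sub>0" using z by (auto elim!: nonpos_Ints_cases)
  then have "pochhammer z (Suc n) = Gamma (z + real n + 1) / Gamma z"
    using pochhammer_Gamma[of z "Suc n"] by (simp add: add_ac)
  then show ?thesis
    using z pochhammer_pos[OF z, of "Suc n"] Gamma_real_pos[OF z]
    by (simp add: Gamma_series_def field_simps)
qed

locale gamma_ratio_params =
  fixes a1 a2 c1 c2 :: real
  assumes a1_pos: "0 < a1" and a1_le_a2: "a1 \<le> a2" and c1_pos: "0 < c1" and c1_le_c2: "c1 \<le> c2"
    and a1_le_c1: "a1 \<le> c1" and sum_le: "a1 + a2 \<le> c1 + c2"
begin

definition gamma_ratio :: "real \<Rightarrow> real" where
  "gamma_ratio s = Gamma (a1 + s) * Gamma (a2 + s) * Gamma c1 * Gamma c2 /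
     (Gamma a1 * Gamma a2 * Gamma (c1 + s) * Gamma (c2 + s))"

definition ratio_factor :: "nat \<Rightarrow> real \<Rightarrow> real" where
  "ratio_factor k s = (a1 + k) * (a2 + k) * (c1 + k + s) * (c2 + k + s) /
     ((a1 + k + s) * (a2 + k + s) * (c1 + k) * (c2 + k))"

definition excess :: real where "excess = c1 + c2 - a1 - a2"

definition rate :: real where "rate = c1 + c2 - a1"

definition exp_poly :: "real \<Rightarrow> real" where
  "exp_poly t = exp (- a1 * t) + exp (- a2 * t) - exp (- c1 * t) - exp (- c2 * t)"

lemma a2_pos: "a2 > 0" and c2_pos: "c2 > 0"
  using a1_pos a1_le_a2 c1_pos c1_le_c2 by auto

lemma shift_pos:
  assumes "s > - a1"
  shows "a1 + s > 0" "a2 + s > 0" "c1 + s > 0" "c2 + s > 0"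
  using assms a1_le_a2 a1_le_c1 c1_le_c2 by auto

lemma excess_nonneg: "excess \<ge> 0"
  using sum_le by (simp add: excess_def)

lemma rate_pos: "rate > 0" and rate_ge_a1: "rate \<ge> a1"
  using a1_pos a1_le_c1 c1_le_c2 by (auto simp: rate_def)

lemma gamma_ratio_pos: "s > - a1 \<Longrightarrow> gamma_ratio s > 0"
  using shift_pos[of s] a1_pos a2_pos c1_pos c2_pos unfolding gamma_ratio_def
  by (intro divide_pos_pos mult_pos_pos Gamma_real_pos) auto

lemma ratio_factor_pos: "s > - a1 \<Longrightarrow> ratio_factor k s > 0"
  using shift_pos[of s] a1_pos a2_pos c1_pos c2_pos
  unfolding ratio_factor_def by (intro divide_pos_pos mult_pos_pos) auto

text \<open>Compare \<open>e^(-a1 t) - e^(-c1 t)\<close> with \<open>e^(-c2 t) - e^(-rate t)\<close>, and use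
  \<open>e^(-a2 t) = e^(-rate t) e^(excess t) \<ge> e^(-rate t) (1 + excess t)\<close>.\<close>
lemma exp_poly_ge:
  assumes t: "t > 0"
  shows "exp_poly t \<ge> excess * t * exp (- rate * t)"
proof -
  define h where "h = c1 - a1"
  have h: "h \<ge> 0" using a1_le_c1 by (simp add: h_def)
  have e1: "exp (- a1 * t) - exp (- c1 * t) = exp (- a1 * t) * (1 - exp (- h * t))"
    by (simp add: h_def algebra_simps exp_add[symmetric])
  have e2: "exp (- c2 * t) - exp (- rate * t) = exp (- c2 * t) * (1 - exp (- h * t))"
    by (simp add: h_def rate_def algebra_simps exp_add[symmetric])
  have "exp (- h * t) \<le> 1" using h t by simp
  moreover have "exp (- c2 * t) \<le> exp (- a1 * t)" using a1_le_c1 c1_le_c2 t by simp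
  ultimately have A: "exp (- a1 * t) - exp (- c1 * t) \<ge> exp (- c2 * t) - exp (- rate * t)"
    unfolding e1 e2 by (intro mult_right_mono) auto
  have "exp (- a2 * t) = exp (- rate * t) * exp (excess * t)"
    by (simp add: rate_def excess_def exp_add[symmetric] algebra_simps)
  also have "\<dots> \<ge> exp (- rate * t) * (1 + excess * t)"
    by (rule mult_left_mono) (auto simp: exp_ge_add_one_self)
  finally have B: "exp (- a2 * t) - exp (- rate * t) \<ge> excess * t * exp (- rate * t)"
    by (simp add: algebra_simps)
  show ?thesis using A B by (simp add: exp_poly_def)
qed

lemma exp_poly_nonneg: "t > 0 \<Longrightarrow> exp_poly t \<ge> 0"
  using exp_poly_ge[of t] excess_nonneg rate_pos
  by (smt (verit) exp_gt_zero mult_nonneg_nonneg)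

lemma prod_ratio_factor:
  assumes s: "s > - a1"
  shows "(\<Prod>k<Suc n. ratio_factor k s) =
     Gamma_series (a1 + s) n * Gamma_series (a2 + s) n * Gamma_series c1 n * Gamma_series c2 n /
     (Gamma_series a1 n * Gamma_series a2 n * Gamma_series (c1 + s) n * Gamma_series (c2 + s) n)"
proof -
  define P where "P z = pochhammer z (Suc n)" for z :: real
  have P_prod: "P z = (\<Prod>k<Suc n. z + real k)" for z
    unfolding P_def pochhammer_prod by (simp add: atLeast0LessThan)
  have P_pos: "P z > 0" if "z > 0" for z
    unfolding P_prod using that by (intro prod_pos) auto
  define E where "E z = fact n * exp (z * ln (real n))" for z :: real
  have GS: "Gamma_series z n = E z / P z" for z
    by (simp add: Gamma_series_def E_def P_def)
  have E: "E (a1 + s) * E (a2 + s) * E c1 * E c2 = E a1 * E a2 * E (c1 + s) * E (c2 + s)"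
    unfolding E_def by (simp add: mult_exp_exp algebra_simps)
  have "(\<Prod>k<Suc n. ratio_factor k s) =
      (P a1 * P a2 * P (c1 + s) * P (c2 + s)) / (P (a1 + s) * P (a2 + s) * P c1 * P c2)"
    unfolding ratio_factor_def P_prod prod_dividef[symmetric] prod.distrib[symmetric]
    by (simp add: add_ac)
  also have "\<dots> = Gamma_series (a1 + s) n * Gamma_series (a2 + s) n * Gamma_series c1 n *
      Gamma_series c2 n / (Gamma_series a1 n * Gamma_series a2 n * Gamma_series (c1 + s) n *
      Gamma_series (c2 + s) n)"
    unfolding GS using E shift_pos[OF s] a1_pos a2_pos c1_pos c2_pos P_pos
    by (simp add: field_simps E_def)
  finally show ?thesis .
qed

lemma prod_ratio_factor_LIMSEQ:
  assumes s: "s > - a1"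
  shows "(\<lambda>n. \<Prod>k<n. ratio_factor k s) \<longlonglongrightarrow> gamma_ratio s"
proof -
  have "Gamma a1 * Gamma a2 * Gamma (c1 + s) * Gamma (c2 + s) \<noteq> 0"
    using shift_pos[OF s] a1_pos a2_pos by (simp add: Gamma_real_pos less_imp_neq[symmetric])
  then have "(\<lambda>n. \<Prod>k<Suc n. ratio_factor k s) \<longlonglongrightarrow> gamma_ratio s"
    unfolding prod_ratio_factor[OF s] gamma_ratio_def by (intro tendsto_intros) auto
  then show ?thesis by (rule LIMSEQ_imp_Suc)
qed

lemma ln_ratio_factor_sums:
  assumes s: "s > - a1"
  shows "(\<lambda>k. ln (ratio_factor k s)) sums ln (gamma_ratio s)"
proof -
  have "(\<lambda>n. ln (\<Prod>k<n. ratio_factor k s)) \<longlonglongrightarrow> ln (gamma_ratio s)"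
    using gamma_ratio_pos[OF s] by (intro tendsto_ln prod_ratio_factor_LIMSEQ s) simp
  moreover have "ln (\<Prod>k<n. ratio_factor k s) = (\<Sum>k<n. ln (ratio_factor k s))" for n
    using ratio_factor_pos[OF s] by (subst ln_prod) (auto simp: less_imp_neq[symmetric])
  ultimately show ?thesis unfolding sums_def by simp
qed

definition levy_density :: "real \<Rightarrow> real" where
  "levy_density t = (if t > 0 then exp_poly t / (t * (1 - exp (- t))) else 0)"

text \<open>The \<open>k\<close>-th term of the expansion of \<open>(e^(-st) - 1) levy_density t\<close> by
  \<open>1 / (1 - e^(-t)) = \<Sum>\<^sub>k e^(-kt)\<close>; its integral is a sum of four Frullani integrals.\<close>
definition levy_term :: "real \<Rightarrow> nat \<Rightarrow> real \<Rightarrow> real" where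
  "levy_term s k t = (if t > 0 then exp (- t) ^ k * (exp (- s * t) - 1) * exp_poly t / t else 0)"

lemma levy_density_measurable [measurable]: "levy_density \<in> borel_measurable borel"
  unfolding levy_density_def exp_poly_def by measurable

lemma levy_term_measurable [measurable]: "levy_term s k \<in> borel_measurable borel"
  unfolding levy_term_def exp_poly_def by measurable

lemma levy_term_eq_frullani:
  "levy_term s k t =
     frullani_integrand (a1 + k + s) (a1 + k) t + frullani_integrand (a2 + k + s) (a2 + k) t
     - frullani_integrand (c1 + k + s) (c1 + k) t - frullani_integrand (c2 + k + s) (c2 + k) t"
proof (cases "t > 0")
  case True
  have "exp (- t) ^ k = exp (- (real k * t))"
    by (simp add: exp_of_nat_mult[symmetric] mult_ac)
  with True show ?thesis
    unfolding levy_term_def frullani_integrand_def exp_poly_def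
    by (simp add: field_simps exp_add[symmetric] exp_diff)
qed (simp add: levy_term_def frullani_integrand_def)

lemma integral_levy_term:
  assumes s: "s > - a1"
  shows "integrable lborel (levy_term s k)"
    and "(\<integral>t. levy_term s k t \<partial>lborel) = ln (ratio_factor k s)"
proof -
  have pos: "a1 + k + s > 0" "a2 + k + s > 0" "c1 + k + s > 0" "c2 + k + s > 0"
    "a1 + k > 0" "a2 + k > 0" "c1 + k > 0" "c2 + k > 0"
    using shift_pos[OF s] a1_pos a2_pos c1_pos c2_pos by auto
  note F = frullani[OF pos(1,5)] frullani[OF pos(2,6)] frullani[OF pos(3,7)] frullani[OF pos(4,8)]
  show "integrable lborel (levy_term s k)"
    unfolding levy_term_eq_frullani using F by simp
  show "(\<integral>t. levy_term s k t \<partial>lborel) = ln (ratio_factor k s)"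
    unfolding levy_term_eq_frullani ratio_factor_def using F pos by (simp add: ln_div ln_mult)
qed

text \<open>The terms have a common sign, so their absolute integrals are summable as well.\<close>
lemma summable_integral_norm_levy_term:
  assumes s: "s > - a1"
  shows "summable (\<lambda>k. \<integral>t. norm (levy_term s k t) \<partial>lborel)"
proof -
  have "levy_term s k t \<le> 0" if "s \<ge> 0" for k t
    using that exp_poly_nonneg[of t]
    by (auto simp: levy_term_def mult_nonpos_nonneg divide_nonpos_pos mult_nonneg_nonpos)
  moreover have "levy_term s k t \<ge> 0" if "s \<le> 0" for k t
    using that exp_poly_nonneg[of t] by (auto simp: levy_term_def mult_nonpos_nonneg)
  ultimately have "(\<lambda>k. \<integral>t. norm (levy_term s k t) \<partial>lborel) =
      (\<lambda>k. if s \<ge> 0 then - ln (ratio_factor k s) else ln (ratio_factor k s))"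
    using integral_levy_term(2)[OF s] by (auto simp: abs_of_nonpos abs_of_nonneg)
  then show ?thesis
    using ln_ratio_factor_sums[OF s] by (cases "s \<ge> 0") (auto intro: summable_minus simp: sums_iff)
qed

lemma levy_density_integral:
  assumes s: "s > - a1"
  shows "integrable lborel (\<lambda>t. (exp (- s * t) - 1) * levy_density t)"
    and "(\<integral>t. (exp (- s * t) - 1) * levy_density t \<partial>lborel) = ln (gamma_ratio s)"
proof -
  have geom: "(\<lambda>k. levy_term s k t) sums ((exp (- s * t) - 1) * levy_density t)" for t
  proof (cases "t > 0")
    case True
    then have "norm (exp (- t)) < 1" by simp
    from sums_mult2[OF geometric_sums[OF this], of "(exp (- s * t) - 1) * exp_poly t / t"]
    show ?thesis using True by (simp add: levy_term_def levy_density_def field_simps)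
  qed (simp add: levy_term_def levy_density_def)
  have ae: "AE t in lborel. summable (\<lambda>k. norm (levy_term s k t))"
  proof (intro AE_I2)
    fix t :: real
    show "summable (\<lambda>k. norm (levy_term s k t))"
    proof (cases "t > 0")
      case True
      then have "norm (exp (- t)) < 1" by simp
      from summable_mult2[OF summable_geometric[OF this],
          of "\<bar>(exp (- s * t) - 1) * exp_poly t / t\<bar>"]
      show ?thesis using True by (simp add: levy_term_def abs_mult power_abs mult.assoc)
    qed (simp add: levy_term_def)
  qed
  note int = integral_levy_term(1)[OF s] and summ = summable_integral_norm_levy_term[OF s]
  have "(\<lambda>t. \<Sum>k. levy_term s k t) = (\<lambda>t. (exp (- s * t) - 1) * levy_density t)"
    using geom by (simp add: sums_iff)
  moreover have "(\<lambda>k. \<integral>t. levy_term s k t \<partial>lborel) sums (\<integral>t. (\<Sum>k. levy_term s k t) \<partial>lborel)"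
    by (rule sums_integral[OF int ae summ])
  moreover note integrable_suminf[OF int ae summ]
  ultimately show "integrable lborel (\<lambda>t. (exp (- s * t) - 1) * levy_density t)"
    and "(\<integral>t. (exp (- s * t) - 1) * levy_density t \<partial>lborel) = ln (gamma_ratio s)"
    using ln_ratio_factor_sums[OF s] integral_levy_term(2)[OF s] sums_unique2 by auto
qed

text \<open>\<open>excess * exp (- rate * t) / t\<close> is the Levy density of the gamma law with shape
  \<open>excess\<close> and rate \<open>rate\<close>.\<close>
definition jump_density :: "real \<Rightarrow> real" where
  "jump_density t = (if t > 0 then levy_density t - excess * exp (- rate * t) / t else 0)"

lemma jump_density_measurable [measurable]: "jump_density \<in> borel_measurable borel"
  unfolding jump_density_def by measurable

lemma jump_density_nonneg: "jump_density t \<ge> 0"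
proof (cases "t > 0")
  case True
  define q where "q = 1 - exp (- t)"
  have q: "0 < q" "q \<le> t" using True exp_ge_add_one_self[of "- t"] by (auto simp: q_def)
  have "excess * exp (- rate * t) / t \<le> excess * exp (- rate * t) / q"
    using q True excess_nonneg by (intro divide_left_mono) auto
  also have "\<dots> = excess * t * exp (- rate * t) / (t * q)" using True by simp
  also have "\<dots> \<le> exp_poly t / (t * q)"
    using exp_poly_ge[OF True] q True by (intro divide_right_mono) auto
  finally show ?thesis using True by (simp add: jump_density_def levy_density_def q_def)
qed (simp add: jump_density_def)

lemma jump_density_integral:
  assumes s: "s > - a1"
  shows "integrable lborel (\<lambda>t. (exp (- s * t) - 1) * jump_density t)"
    and "(\<integral>t. (exp (- s * t) - 1) * jump_density t \<partial>lborel) =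
      ln (gamma_ratio s) - excess * (ln rate - ln (rate + s))"
proof -
  have rs: "rate + s > 0" using rate_ge_a1 s by linarith
  have "(\<lambda>t. (exp (- s * t) - 1) * jump_density t) =
      (\<lambda>t. (exp (- s * t) - 1) * levy_density t - excess * frullani_integrand (rate + s) rate t)"
  proof
    fix t :: real
    show "(exp (- s * t) - 1) * jump_density t =
        (exp (- s * t) - 1) * levy_density t - excess * frullani_integrand (rate + s) rate t"
      by (cases "t > 0")
         (auto simp: jump_density_def levy_density_def frullani_integrand_def field_simps
           exp_add[symmetric])
  qed
  then show "integrable lborel (\<lambda>t. (exp (- s * t) - 1) * jump_density t)"
    and "(\<integral>t. (exp (- s * t) - 1) * jump_density t \<partial>lborel) =
      ln (gamma_ratio s) - excess * (ln rate - ln (rate + s))"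
    using levy_density_integral[OF s] frullani[OF rs rate_pos] by simp_all
qed

definition gamma_series_ratio :: "nat \<Rightarrow> real" where
  "gamma_series_ratio n =
     Gamma_series c1 n * Gamma_series c2 n / (Gamma_series a1 n * Gamma_series a2 n)"

lemma gamma_series_ratio_pos: "gamma_series_ratio n > 0"
  unfolding gamma_series_ratio_def using a1_pos a2_pos c1_pos c2_pos
  by (intro divide_pos_pos mult_pos_pos Gamma_series_pos)

lemma gamma_series_ratio_LIMSEQ:
  "gamma_series_ratio \<longlonglongrightarrow> Gamma c1 * Gamma c2 / (Gamma a1 * Gamma a2)"
proof -
  have "Gamma a1 * Gamma a2 \<noteq> 0" using a1_pos a2_pos by (simp add: less_imp_neq[symmetric])
  then show ?thesis unfolding gamma_series_ratio_def[abs_def] by (intro tendsto_intros) auto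
qed

lemma gamma_ratio_Suc_nat:
  "gamma_ratio (real n + 1) = exp (- excess * ln (real n)) * gamma_series_ratio n"
proof -
  have G: "Gamma (z + (real n + 1)) = Gamma z * fact n * exp (z * ln (real n)) / Gamma_series z n"
    if "z > 0" for z
    using Gamma_add_nat_eq_Gamma_series[OF that, of n] by (simp add: add_ac)
  have "exp (a1 * ln (real n)) * exp (a2 * ln (real n)) =
      exp (- excess * ln (real n)) * (exp (c1 * ln (real n)) * exp (c2 * ln (real n)))"
    by (simp add: mult_exp_exp excess_def algebra_simps)
  then show ?thesis
    unfolding gamma_ratio_def gamma_series_ratio_def
      G[OF a1_pos] G[OF a2_pos] G[OF c1_pos] G[OF c2_pos]
    using Gamma_series_pos[of _ n] Gamma_real_pos a1_pos a2_pos c1_pos c2_pos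
    by (simp add: field_simps less_imp_neq[symmetric])
qed

lemma nn_integral_truncated_jump_density_bounded:
  "\<exists>K. \<forall>n. (\<integral>\<^sup>+t. ennreal ((1 - exp (- (real n + 1) * t)) * jump_density t) \<partial>lborel) \<le> ennreal K"
proof -
  have "(\<lambda>n. ln (gamma_series_ratio n)) \<longlonglongrightarrow> ln (Gamma c1 * Gamma c2 / (Gamma a1 * Gamma a2))"
    using a1_pos a2_pos c1_pos c2_pos
    by (intro tendsto_ln gamma_series_ratio_LIMSEQ) (simp add: less_imp_neq[symmetric])
  then obtain K where K: "\<And>n. norm (ln (gamma_series_ratio n)) \<le> K"
    using convergentI convergent_imp_Bseq BseqE by metis
  have "(\<integral>\<^sup>+t. ennreal ((1 - exp (- (real n + 1) * t)) * jump_density t) \<partial>lborel)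
      \<le> ennreal (K + excess * ln rate)" for n
  proof -
    have sn: "real n + 1 > - a1" using a1_pos by simp
    have nonneg: "0 \<le> (1 - exp (- (real n + 1) * t)) * jump_density t" for t
    proof (cases "t > 0")
      case True
      then have "exp (- (real n + 1) * t) \<le> 1" by (simp add: mult_nonpos_nonneg)
      with jump_density_nonneg[of t] show ?thesis by simp
    qed (simp add: jump_density_def)
    have "(\<integral>\<^sup>+t. ennreal ((1 - exp (- (real n + 1) * t)) * jump_density t) \<partial>lborel) =
        (\<integral>\<^sup>+t. ennreal (- ((exp (- (real n + 1) * t) - 1) * jump_density t)) \<partial>lborel)"
      by (simp add: algebra_simps)
    also have "\<dots> = ennreal (\<integral>t. - ((exp (- (real n + 1) * t) - 1) * jump_density t) \<partial>lborel)"
      using nonneg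
      by (intro nn_integral_eq_integral integrable_minus jump_density_integral(1)[OF sn])
         (auto simp: algebra_simps)
    also have "(\<integral>t. - ((exp (- (real n + 1) * t) - 1) * jump_density t) \<partial>lborel) =
        - (ln (gamma_ratio (real n + 1)) - excess * (ln rate - ln (rate + (real n + 1))))"
      using jump_density_integral(2)[OF sn] by simp
    also have "- (ln (gamma_ratio (real n + 1)) - excess * (ln rate - ln (rate + (real n + 1)))) =
        - ln (gamma_series_ratio n) + excess * (ln (real n) - ln (rate + real n + 1)) +
          excess * ln rate"
      unfolding gamma_ratio_Suc_nat using gamma_series_ratio_pos[of n]
      by (simp add: ln_mult algebra_simps)
    also have "\<dots> \<le> K + excess * ln rate"
    proof -
      have "ln (real n) \<le> ln (rate + real n + 1)"
        using rate_pos by (cases "n = 0") simp_all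
      then have "excess * (ln (real n) - ln (rate + real n + 1)) \<le> 0"
        using excess_nonneg by (simp add: mult_nonneg_nonpos)
      with K[of n] show ?thesis by simp
    qed
    finally show ?thesis by (simp add: ennreal_leI)
  qed
  then show ?thesis by blast
qed

lemma integrable_jump_density: "integrable lborel jump_density"
proof -
  define f where "f n t = ennreal ((1 - exp (- (real n + 1) * t)) * jump_density t)"
    for n :: nat and t :: real
  have [measurable]: "f n \<in> borel_measurable borel" for n
    unfolding f_def by measurable
  have "incseq f"
  proof (intro incseq_SucI le_funI)
    fix n t
    show "f n t \<le> f (Suc n) t"
      using jump_density_nonneg[of t]
      by (cases "t > 0") (auto simp: f_def jump_density_def intro!: ennreal_leI mult_right_mono)
  qed
  moreover have "(\<lambda>n. f n t) \<longlonglongrightarrow> ennreal (jump_density t)" for t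
  proof (cases "t > 0")
    case True
    have "(\<lambda>n. exp (- (real n + 1) * t)) = (\<lambda>n. exp (- t) ^ Suc n)"
    proof
      fix n
      show "exp (- (real n + 1) * t) = exp (- t) ^ Suc n"
        using exp_of_nat_mult[of "Suc n" "- t"] by (simp add: algebra_simps)
    qed
    moreover have "(\<lambda>n. exp (- t) ^ Suc n) \<longlonglongrightarrow> 0"
      by (rule LIMSEQ_Suc[OF LIMSEQ_power_zero]) (use True in simp)
    ultimately have "(\<lambda>n. (1 - exp (- (real n + 1) * t)) * jump_density t)
        \<longlonglongrightarrow> (1 - 0) * jump_density t"
      by (intro tendsto_intros) simp
    then show ?thesis unfolding f_def by (intro tendsto_ennrealI) simp
  qed (simp add: f_def jump_density_def)
  ultimately have "(\<lambda>n. integral\<^sup>N lborel (f n)) \<longlonglongrightarrow> (\<integral>\<^sup>+t. ennreal (jump_density t) \<partial>lborel)"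
    by (intro nn_integral_LIMSEQ) auto
  moreover obtain K where "\<And>n. integral\<^sup>N lborel (f n) \<le> ennreal K"
    using nn_integral_truncated_jump_density_bounded unfolding f_def by blast
  ultimately have "(\<integral>\<^sup>+t. ennreal (jump_density t) \<partial>lborel) \<le> ennreal K"
    by (intro LIMSEQ_le_const2) auto
  then show ?thesis
    using jump_density_nonneg
    by (intro integrableI_nonneg) (auto simp: top_unique intro: le_less_trans)
qed

definition jump_rate :: real where
  "jump_rate = (\<integral>t. jump_density t \<partial>lborel)"

text \<open>For \<open>jump_rate = 0\<close> no jumps occur, and the choice of the jump law is irrelevant.\<close>
definition jump_law :: "real measure" where
  "jump_law = (if jump_rate > 0 then density lborel (\<lambda>t. ennreal (jump_density t / jump_rate))
     else return borel 0)"

lemma jump_rate_nonneg: "jump_rate \<ge> 0"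
  unfolding jump_rate_def by (intro integral_nonneg_AE) (simp add: jump_density_nonneg)

lemma sets_jump_law [simp, measurable_cong]: "sets jump_law = sets borel"
  by (simp add: jump_law_def)

lemma prob_space_jump_law: "prob_space jump_law"
proof (cases "jump_rate > 0")
  case True
  have "(\<integral>\<^sup>+t. ennreal (jump_density t / jump_rate) \<partial>lborel) =
      ennreal (\<integral>t. jump_density t / jump_rate \<partial>lborel)"
    using True integrable_jump_density jump_density_nonneg
    by (intro nn_integral_eq_integral) (auto intro!: divide_nonneg_pos)
  also have "(\<integral>t. jump_density t / jump_rate \<partial>lborel) = 1"
    using True by (simp add: jump_rate_def[symmetric])
  finally show ?thesis
    using True unfolding jump_law_def by (intro prob_spaceI) (simp add: emeasure_density)
qed (simp add: jump_law_def prob_space_return)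

lemma AE_jump_law_nonneg: "AE y in jump_law. y \<ge> 0"
proof (cases "jump_rate > 0")
  case True
  then show ?thesis
    unfolding jump_law_def if_P[OF True]
    by (subst AE_density) (auto simp: jump_density_def intro!: AE_I2)
next
  case False
  then show ?thesis
    unfolding jump_law_def if_not_P[OF False] by (subst AE_return) auto
qed

lemma nn_integral_exp_jump_law:
  assumes s: "s > - a1"
  obtains L where "L \<ge> 0" "(\<integral>\<^sup>+y. ennreal (exp (- s * y)) \<partial>jump_law) = ennreal L"
    and "jump_rate * (L - 1) = (\<integral>t. (exp (- s * t) - 1) * jump_density t \<partial>lborel)"
proof (cases "jump_rate > 0")
  case True
  note J = jump_density_integral[OF s]
  define L where "L = (\<integral>t. exp (- s * t) * jump_density t / jump_rate \<partial>lborel)"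
  have eq: "exp (- s * t) * jump_density t / jump_rate =
      ((exp (- s * t) - 1) * jump_density t + jump_density t) / jump_rate" for t
    by (simp add: algebra_simps)
  have int: "integrable lborel (\<lambda>t. exp (- s * t) * jump_density t / jump_rate)"
    unfolding eq using J(1) integrable_jump_density by simp
  have nonneg: "0 \<le> exp (- s * t) * jump_density t / jump_rate" for t
    using jump_density_nonneg[of t] True by simp
  show ?thesis
  proof
    show "L \<ge> 0" unfolding L_def using nonneg by (intro integral_nonneg_AE) simp
    have "(\<integral>\<^sup>+y. ennreal (exp (- s * y)) \<partial>jump_law) =
        (\<integral>\<^sup>+t. ennreal (exp (- s * t) * jump_density t / jump_rate) \<partial>lborel)"
      using True jump_density_nonneg
      by (simp add: jump_law_def nn_integral_density ennreal_mult'[symmetric] mult_ac)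
    also have "\<dots> = ennreal L"
      unfolding L_def using int nonneg by (intro nn_integral_eq_integral) auto
    finally show "(\<integral>\<^sup>+y. ennreal (exp (- s * y)) \<partial>jump_law) = ennreal L" .
    have "L = (\<integral>t. (exp (- s * t) - 1) * jump_density t + jump_density t \<partial>lborel) / jump_rate"
      unfolding L_def eq by simp
    also have "\<dots> = ((\<integral>t. (exp (- s * t) - 1) * jump_density t \<partial>lborel) + jump_rate) / jump_rate"
      unfolding jump_rate_def using J(1) integrable_jump_density
      by (subst Bochner_Integration.integral_add) auto
    finally have "L =
        ((\<integral>t. (exp (- s * t) - 1) * jump_density t \<partial>lborel) + jump_rate) / jump_rate" .
    then show "jump_rate * (L - 1) = (\<integral>t. (exp (- s * t) - 1) * jump_density t \<partial>lborel)"
      using True by (simp add: field_simps)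
  qed
next
  case False
  then have "jump_rate = 0" using jump_rate_nonneg by simp
  then have "AE t in lborel. jump_density t = 0"
    using integrable_jump_density jump_density_nonneg
    by (subst integral_nonneg_eq_0_iff_AE[symmetric]) (auto simp: jump_rate_def)
  then have "AE t in lborel. (exp (- s * t) - 1) * jump_density t = 0"
    by eventually_elim simp
  then have "(\<integral>t. (exp (- s * t) - 1) * jump_density t \<partial>lborel) = 0"
    by (rule integral_eq_zero_AE)
  with False \<open>jump_rate = 0\<close> show ?thesis
    by (intro that[of 1]) (simp_all add: jump_law_def nn_integral_return)
qed

definition levy_law :: "real measure" where
  "levy_law = gamma_compound_poisson excess rate jump_rate jump_law"

lemma sets_levy_law [simp, measurable_cong]: "sets levy_law = sets borel"
  by (simp add: levy_law_def)

lemma prob_space_levy_law: "prob_space levy_law"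
  unfolding levy_law_def
  by (rule prob_space_gamma_compound_poisson[OF prob_space_jump_law sets_jump_law rate_pos
        excess_nonneg])

lemma AE_levy_law_nonneg: "AE y in levy_law. y \<ge> 0"
  unfolding levy_law_def
  by (rule AE_gamma_compound_poisson_nonneg[OF prob_space_jump_law sets_jump_law rate_pos
        excess_nonneg AE_jump_law_nonneg])

lemma infinitely_divisible_levy_law: "infinitely_divisible (distr levy_law borel uminus)"
  unfolding levy_law_def
  by (rule infinitely_divisible_gamma_compound_poisson[OF prob_space_jump_law sets_jump_law
        rate_pos excess_nonneg jump_rate_nonneg])

lemma nn_integral_exp_levy_law:
  assumes s: "s > - a1"
  shows "(\<integral>\<^sup>+y. ennreal (exp (- s * y)) \<partial>levy_law) = ennreal (gamma_ratio s)"
proof -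
  have rs: "rate + s > 0" using rate_ge_a1 s by linarith
  obtain L where L: "L \<ge> 0" "(\<integral>\<^sup>+y. ennreal (exp (- s * y)) \<partial>jump_law) = ennreal L"
    and rate_L: "jump_rate * (L - 1) = (\<integral>t. (exp (- s * t) - 1) * jump_density t \<partial>lborel)"
    using nn_integral_exp_jump_law[OF s] .
  have "(rate / (rate + s)) powr excess = exp (excess * (ln rate - ln (rate + s)))"
    using rate_pos rs by (simp add: powr_def ln_div)
  then have "(rate / (rate + s)) powr excess * exp (jump_rate * (L - 1)) = gamma_ratio s"
    using gamma_ratio_pos[OF s] rate_L jump_density_integral(2)[OF s] by (simp add: exp_diff)
  then show ?thesis
    unfolding levy_law_def
    using nn_integral_exp_gamma_compound_poisson[OF prob_space_jump_law sets_jump_law rate_pos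
        excess_nonneg jump_rate_nonneg rs L(2,1)]
    by simp
qed

lemma gamma_ratio_nat_LIMSEQ:
  assumes "a1 + a2 = c1 + c2"
  shows "(\<lambda>n. gamma_ratio (real n)) \<longlonglongrightarrow> Gamma c1 * Gamma c2 / (Gamma a1 * Gamma a2)"
proof -
  have "excess = 0" using assms by (simp add: excess_def)
  have eq: "(\<lambda>n. gamma_ratio (real (Suc n))) = gamma_series_ratio"
  proof
    fix n
    show "gamma_ratio (real (Suc n)) = gamma_series_ratio n"
      using gamma_ratio_Suc_nat[of n] \<open>excess = 0\<close> by (simp add: add.commute)
  qed
  have "(\<lambda>n. gamma_ratio (real (Suc n))) \<longlonglongrightarrow> Gamma c1 * Gamma c2 / (Gamma a1 * Gamma a2)"
    unfolding eq by (rule gamma_series_ratio_LIMSEQ)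
  then show ?thesis by (rule LIMSEQ_imp_Suc)
qed

end

theorem mainTheorem7:
  fixes a1 a2 c1 c2 :: real
  assumes "0 < a1" "a1 \<le> a2" "0 < c1" "c1 \<le> c2"
    and "a1 \<le> c1" and "a1 + a2 \<le> c1 + c2"
  shows "\<exists>M :: real measure.
           prob_space M \<and> sets M = sets borel \<and>
           (AE x in M. 0 \<le> x \<and> x \<le> 1) \<and>
           (\<forall>s::real. s > - a1 \<longrightarrow>
              integrable M (\<lambda>x. x powr s) \<and>
              (\<integral>x. x powr s \<partial>M) =
                Gamma (a1 + s) * Gamma (a2 + s) * Gamma c1 * Gamma c2 /
                (Gamma a1 * Gamma a2 * Gamma (c1 + s) * Gamma (c2 + s))) \<and>
           infinitely_divisible (distr M borel ln) \<and>
           (a1 + a2 = c1 + c2 \<longrightarrow>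
              measure M {1} = Gamma c1 * Gamma c2 / (Gamma a1 * Gamma a2))"
proof -
  interpret gamma_ratio_params a1 a2 c1 c2
    using assms by unfold_locales
  define M where "M = distr levy_law borel (\<lambda>y. exp (- y))"
  have M: "prob_space M" "sets M = sets borel"
    unfolding M_def using prob_space_levy_law by (auto intro: prob_space.prob_space_distr)
  have unit: "AE x in M. 0 \<le> x \<and> x \<le> 1"
    unfolding M_def using AE_levy_law_nonneg by (subst AE_distr_iff) auto
  have moments: "integrable M (\<lambda>x. x powr s) \<and> (\<integral>x. x powr s \<partial>M) = gamma_ratio s"
    if "s > - a1" for s
    using nn_integral_exp_levy_law[OF that] gamma_ratio_pos[OF that]
      nn_integral_eq_integrable[of "\<lambda>x. x powr s" M "gamma_ratio s"]
    by (simp add: M_def nn_integral_powr_distr_exp_neg)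
  have "measure M {1} = Gamma c1 * Gamma c2 / (Gamma a1 * Gamma a2)" if "a1 + a2 = c1 + c2"
    using measure_1_eq_lim_moments[OF M unit] gamma_ratio_nat_LIMSEQ[OF that] moments a1_pos
    by (simp add: add_pos_nonneg)
  moreover have "infinitely_divisible (distr M borel ln)"
    using infinitely_divisible_levy_law by (simp add: M_def distr_ln_distr_exp_neg)
  ultimately show ?thesis
    using M unit moments unfolding gamma_ratio_def by blast
qed

end
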